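(* In the setting below, let $\tilde h\in L_2(s)$ and define $h^*(\theta)=\tilde h(t(\theta))$ for $\theta\in\Theta$. Then $h^*\in L_2(\nu)$ and $\tilde\Delta(\tilde h)=\Delta(h^* )$.
   Context: $(\mathcal{X},\mathcal{B})$ and $(\Theta,\mathcal{C})$ are Polish spaces with Borel $\sigma$-algebras; $P(\cdot\mid\theta)$ is a Markov kernel; $\nu$ is a $\sigma$-finite measure on $\Theta$; the marginal $M(B)=\int P(B\mid\theta)\nu(d\theta)$ is $\sigma$-finite; $Q(d\theta\mid x)$ is a Markov kernel with $P(dx\mid\theta)\nu(d\theta)=Q(d\theta\mid x)M(dx)$. The transition $R(C\mid\eta)=\int_{\mathcal{X}}Q(C\mid x)P(dx\mid\eta)$ defines the Dirichlet form $\Delta(h)=\frac12\int\int (h(\theta)-h(\eta))^2R(d\theta\mid\eta)\nu(d\eta)$ for $h\in L_2(\nu)$. Let $t:\Theta\to[0,\infty)$ be measurable and $s(A)=\nu(t^{-1}(A))$ on Borel sets of $[0,\infty)$. Assume there are disjoint Borel sets $A_i$, $i\ge1$, covering $[0,\infty)$ with $0<\nu(t^{-1}(A_i))<\infty$. Let $\pi(d\theta\mid a)$ be a Markov kernel with $\int f_2(t(\theta))f_1(\theta)\nu(d\theta)=\int_0^\infty f_2(a)\int f_1(\theta)\pi(d\theta\mid a)\,s(da)$ for all nonnegative measurable $f_1,f_2$. Set $\tilde P(dx\mid a)=\int P(dx\mid\theta)\pi(d\theta\mid a)$; its marginal under $s$ is $M$, and $\tilde Q(da\mid x)$ is a Markov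 kernel with $\tilde P(dx\mid a)s(da)=\tilde Q(da\mid x)M(dx)$. Let $\tilde R(da\mid b)=\int\tilde Q(da\mid x)\tilde P(dx\mid b)$ and $\tilde\Delta(\tilde h)=\frac12\int_0^\infty\int_0^\infty(\tilde h(a)-\tilde h(b))^2\tilde R(da\mid b)s(db)$. *)

theory Defs
  imports "HOL-Probability.Probability"
begin

definition markov_kernel :: "'a measure \<Rightarrow> 'b measure \<Rightarrow> ('a \<Rightarrow> 'b measure) \<Rightarrow> bool" where
  "markov_kernel A B K \<longleftrightarrow> K \<in> A \<rightarrow>\<^sub>M prob_algebra B"

text \<open>Joint-measure identity  K(dy|x) mu(dx) = L(dx|y) m(dy), i.e. for all measurable
  rectangles A (in the space of mu) and B (in the space of m):
  integral over A of K(B|x) mu(dx) = integral over B of L(A|y) m(dy).\<close>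
definition joint_identity ::
  "('a \<Rightarrow> 'b measure) \<Rightarrow> 'a measure \<Rightarrow> ('b \<Rightarrow> 'a measure) \<Rightarrow> 'b measure \<Rightarrow> bool" where
  "joint_identity K mu L m \<longleftrightarrow>
     (\<forall>A\<in>sets mu. \<forall>B\<in>sets m.
        (\<integral>\<^sup>+x. indicator A x * emeasure (K x) B \<partial>mu) = (\<integral>\<^sup>+y. indicator B y * emeasure (L y) A \<partial>m))"

definition dirichlet_form :: "('a \<Rightarrow> 'a measure) \<Rightarrow> 'a measure \<Rightarrow> ('a \<Rightarrow> real) \<Rightarrow> ennreal" where
  "dirichlet_form R mu h = (\<integral>\<^sup>+\<eta>. (\<integral>\<^sup>+\<theta>. ennreal ((h \<theta> - h \<eta>)\<^sup>2) \<partial>(R \<eta>)) \<partial>mu) / 2"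

definition in_L2 :: "'a measure \<Rightarrow> ('a \<Rightarrow> real) \<Rightarrow> bool" where
  "in_L2 mu f \<longleftrightarrow> f \<in> borel_measurable mu \<and> integrable mu (\<lambda>x. (f x)\<^sup>2)"

end

theory Submission
  imports Defs
begin

(*
  The joint identities say that the kernel pairs (P, Q), (Pt, Qt) and (pi, delta o t) are adjoint:
  K(db|a) mu(da) = L(da|b) m(db).  Adjointness is preserved under composition of kernels, so
  Q followed by t is, like Qt, adjoint to Pt = pi P; hence Qt(x) and the image of Q(x) under t
  integrate alike against every test function.  It follows that the one-step laws
  s(db) Rt(da|b) and the image under t x t of nu(d eta) R(d theta|eta) give the same integral to
  every product c(a) d(b) of nonnegative functions.  With p and n the positive and negative parts
  of h, the function (h a - h b)^2 + 2 (p a p b + n a n b) is a sum of such products, and the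
  added cross terms are finite because h is in L2(s); cancelling them gives the claim.
*)

definition kernel_adjoint ::
  "'a measure \<Rightarrow> ('a \<Rightarrow> 'b measure) \<Rightarrow> 'b measure \<Rightarrow> ('b \<Rightarrow> 'a measure) \<Rightarrow> bool" where
  "kernel_adjoint \<mu> K m L \<longleftrightarrow> (\<forall>f\<in>borel_measurable \<mu>. \<forall>k\<in>borel_measurable m.
     (\<integral>\<^sup>+a. f a * (\<integral>\<^sup>+b. k b \<partial>K a) \<partial>\<mu>) = (\<integral>\<^sup>+b. k b * (\<integral>\<^sup>+a. f a \<partial>L b) \<partial>m))"

lemma kernel_adjointD:
  assumes "kernel_adjoint \<mu> K m L" "f \<in> borel_measurable \<mu>" "k \<in> borel_measurable m"
  shows "(\<integral>\<^sup>+a. f a * (\<integral>\<^sup>+b. k b \<partial>K a) \<partial>\<mu>) = (\<integral>\<^sup>+b. k b * (\<integral>\<^sup>+a. f a \<partial>L b) \<partial>m)"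
  using assms unfolding kernel_adjoint_def by blast

lemma measurable_nn_integral_kernel:
  assumes "K \<in> \<mu> \<rightarrow>\<^sub>M subprob_algebra m" "f \<in> borel_measurable m"
  shows "(\<lambda>a. \<integral>\<^sup>+b. f b \<partial>K a) \<in> borel_measurable \<mu>"
  by (rule measurable_compose[OF assms(1) nn_integral_measurable_subprob_algebra[OF assms(2)]])

lemma nn_integral_density_bind:
  assumes K: "K \<in> \<mu> \<rightarrow>\<^sub>M subprob_algebra m"
    and g: "g \<in> borel_measurable \<mu>" and k: "k \<in> borel_measurable m"
  shows "(\<integral>\<^sup>+b. k b \<partial>(density \<mu> g \<bind> K)) = (\<integral>\<^sup>+a. g a * (\<integral>\<^sup>+b. k b \<partial>K a) \<partial>\<mu>)"
proof -
  have "K \<in> density \<mu> g \<rightarrow>\<^sub>M subprob_algebra m"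
    using K by simp
  then show ?thesis
    by (simp add: nn_integral_bind[OF k] nn_integral_density g
        measurable_nn_integral_kernel[OF K k])
qed

lemma density_bind_eqI:
  assumes K: "K \<in> \<mu> \<rightarrow>\<^sub>M subprob_algebra m" and \<mu>: "space \<mu> \<noteq> {}"
    and g: "g \<in> borel_measurable \<mu>" and w: "w \<in> borel_measurable m"
    and eq: "\<And>V. V \<in> sets m \<Longrightarrow>
      (\<integral>\<^sup>+a. g a * emeasure (K a) V \<partial>\<mu>) = (\<integral>\<^sup>+b. w b * indicator V b \<partial>m)"
  shows "density \<mu> g \<bind> K = density m w"
proof (rule measure_eqI)
  show sets: "sets (density \<mu> g \<bind> K) = sets (density m w)"
    using subprob_measurableD(2)[OF K] \<mu> by (subst sets_bind[where N=m]) auto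
  fix V assume "V \<in> sets (density \<mu> g \<bind> K)"
  then have V: "V \<in> sets m" using sets by simp
  have "emeasure (density \<mu> g \<bind> K) V = (\<integral>\<^sup>+b. indicator V b \<partial>(density \<mu> g \<bind> K))"
    using sets V by (simp add: nn_integral_indicator)
  also have "\<dots> = (\<integral>\<^sup>+a. g a * emeasure (K a) V \<partial>\<mu>)"
    using V subprob_measurableD(2)[OF K]
    by (simp add: nn_integral_density_bind[OF K g] nn_integral_indicator cong: nn_integral_cong)
  finally show "emeasure (density \<mu> g \<bind> K) V = emeasure (density m w) V"
    using V by (simp add: eq emeasure_density[OF w V])
qed

lemma joint_identity_imp_kernel_adjoint:
  assumes K: "K \<in> \<mu> \<rightarrow>\<^sub>M subprob_algebra m" and L: "L \<in> m \<rightarrow>\<^sub>M subprob_algebra \<mu>"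
    and KL: "joint_identity K \<mu> L m"
  shows "kernel_adjoint \<mu> K m L"
  unfolding kernel_adjoint_def
proof (intro ballI)
  (* the two sides integrate k against density mu f >>= K and density m (INT f dL); these
     measures agree on all sets, first for indicators f (by the joint identity), then for all f *)
  fix f :: "_ \<Rightarrow> ennreal" and k :: "_ \<Rightarrow> ennreal"
  assume f: "f \<in> borel_measurable \<mu>" and k: "k \<in> borel_measurable m"
  have Lf: "(\<lambda>b. \<integral>\<^sup>+a. f a \<partial>L b) \<in> borel_measurable m"
    by (rule measurable_nn_integral_kernel[OF L f])
  show "(\<integral>\<^sup>+a. f a * (\<integral>\<^sup>+b. k b \<partial>K a) \<partial>\<mu>) = (\<integral>\<^sup>+b. k b * (\<integral>\<^sup>+a. f a \<partial>L b) \<partial>m)"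
  proof (cases "space \<mu> = {}")
    case True
    then have "space m = {}"
      using L by (simp add: measurable_empty_iff space_subprob_algebra_empty_iff)
    with True show ?thesis by (simp add: nn_integral_empty)
  next
    case False
    then have m: "space m \<noteq> {}"
      using K by (auto simp: measurable_empty_iff space_subprob_algebra_empty_iff)
    have KV: "(\<lambda>a. emeasure (K a) V) \<in> borel_measurable \<mu>" if "V \<in> sets m" for V
      by (rule measurable_compose[OF K measurable_emeasure_subprob_algebra[OF that]])
    have "density m (indicator V) \<bind> L = density \<mu> (\<lambda>a. emeasure (K a) V)" if V: "V \<in> sets m" for V
      by (rule density_bind_eqI[OF L m _ KV[OF V]])
        (use KL V in \<open>auto simp: joint_identity_def mult.commute\<close>)
    then have KV_adjoint: "(\<integral>\<^sup>+a. f a * emeasure (K a) V \<partial>\<mu>) = (\<integral>\<^sup>+b. (\<integral>\<^sup>+a. f a \<partial>L b) * indicator V b \<partial>m)"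
      if V: "V \<in> sets m" for V
      using nn_integral_density[OF KV[OF V] f] nn_integral_density_bind[OF L _ f, of "indicator V"] V
      by (simp add: mult.commute)
    have "density \<mu> f \<bind> K = density m (\<lambda>b. \<integral>\<^sup>+a. f a \<partial>L b)"
      by (rule density_bind_eqI[OF K False f Lf KV_adjoint])
    then show ?thesis
      using nn_integral_density_bind[OF K f k] nn_integral_density[OF Lf k]
      by (simp add: mult.commute)
  qed
qed

lemma kernel_adjoint_disintegration:
  assumes t: "t \<in> \<nu> \<rightarrow>\<^sub>M s" and \<pi>: "\<pi> \<in> s \<rightarrow>\<^sub>M subprob_algebra \<nu>"
    and disint: "\<And>U V. U \<in> sets s \<Longrightarrow> V \<in> sets \<nu> \<Longrightarrow>
      (\<integral>\<^sup>+\<theta>. indicator U (t \<theta>) * indicator V \<theta> \<partial>\<nu>) = (\<integral>\<^sup>+a. indicator U a * emeasure (\<pi> a) V \<partial>s)"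
  shows "kernel_adjoint s \<pi> \<nu> (\<lambda>\<theta>. return s (t \<theta>))"
proof (rule joint_identity_imp_kernel_adjoint[OF \<pi>])
  show "(\<lambda>\<theta>. return s (t \<theta>)) \<in> \<nu> \<rightarrow>\<^sub>M subprob_algebra s"
    by (rule measurable_compose[OF t return_measurable])
  show "joint_identity \<pi> s (\<lambda>\<theta>. return s (t \<theta>)) \<nu>"
    unfolding joint_identity_def by (simp add: disint[symmetric] mult.commute)
qed

lemma nn_integral_bind_kernel:
  assumes K: "K \<in> \<mu> \<rightarrow>\<^sub>M subprob_algebra m" and N: "N \<in> m \<rightarrow>\<^sub>M subprob_algebra X"
    and k: "k \<in> borel_measurable X" and a: "a \<in> space \<mu>"
  shows "(\<integral>\<^sup>+x. k x \<partial>(K a \<bind> N)) = (\<integral>\<^sup>+b. (\<integral>\<^sup>+x. k x \<partial>N b) \<partial>K a)"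
  by (rule nn_integral_bind[OF k]) (simp add: N measurable_cong_sets[OF sets_kernel[OF K a]])

lemma nn_integral_kernel_multc:
  assumes K: "K \<in> \<mu> \<rightarrow>\<^sub>M subprob_algebra m" and c: "c \<in> borel_measurable m"
  shows "(\<integral>\<^sup>+b. \<integral>\<^sup>+a. c a * d b \<partial>K b \<partial>\<mu>) = (\<integral>\<^sup>+b. d b * (\<integral>\<^sup>+a. c a \<partial>K b) \<partial>\<mu>)"
  by (intro nn_integral_cong)
    (simp add: nn_integral_multc measurable_cong_sets[OF sets_kernel[OF K] refl] c mult.commute)

lemma kernel_adjoint_bind:
  assumes K1: "K1 \<in> \<alpha> \<rightarrow>\<^sub>M subprob_algebra \<beta>" and L1: "L1 \<in> \<beta> \<rightarrow>\<^sub>M subprob_algebra \<alpha>"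
    and K2: "K2 \<in> \<beta> \<rightarrow>\<^sub>M subprob_algebra \<gamma>" and L2: "L2 \<in> \<gamma> \<rightarrow>\<^sub>M subprob_algebra \<beta>"
    and adj1: "kernel_adjoint \<alpha> K1 \<beta> L1" and adj2: "kernel_adjoint \<beta> K2 \<gamma> L2"
  shows "kernel_adjoint \<alpha> (\<lambda>a. K1 a \<bind> K2) \<gamma> (\<lambda>c. L2 c \<bind> L1)"
  unfolding kernel_adjoint_def
proof (intro ballI)
  fix f :: "_ \<Rightarrow> ennreal" and k :: "_ \<Rightarrow> ennreal"
  assume f: "f \<in> borel_measurable \<alpha>" and k: "k \<in> borel_measurable \<gamma>"
  have K2k: "(\<lambda>b. \<integral>\<^sup>+c. k c \<partial>K2 b) \<in> borel_measurable \<beta>"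
    by (rule measurable_nn_integral_kernel[OF K2 k])
  have L1f: "(\<lambda>b. \<integral>\<^sup>+a. f a \<partial>L1 b) \<in> borel_measurable \<beta>"
    by (rule measurable_nn_integral_kernel[OF L1 f])
  have "(\<integral>\<^sup>+a. f a * (\<integral>\<^sup>+c. k c \<partial>(K1 a \<bind> K2)) \<partial>\<alpha>)
      = (\<integral>\<^sup>+a. f a * (\<integral>\<^sup>+b. (\<integral>\<^sup>+c. k c \<partial>K2 b) \<partial>K1 a) \<partial>\<alpha>)"
    by (intro nn_integral_cong) (simp add: nn_integral_bind_kernel[OF K1 K2 k])
  also have "\<dots> = (\<integral>\<^sup>+b. (\<integral>\<^sup>+a. f a \<partial>L1 b) * (\<integral>\<^sup>+c. k c \<partial>K2 b) \<partial>\<beta>)"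
    by (simp add: kernel_adjointD[OF adj1 f K2k] mult.commute)
  also have "\<dots> = (\<integral>\<^sup>+c. k c * (\<integral>\<^sup>+b. (\<integral>\<^sup>+a. f a \<partial>L1 b) \<partial>L2 c) \<partial>\<gamma>)"
    by (rule kernel_adjointD[OF adj2 L1f k])
  also have "\<dots> = (\<integral>\<^sup>+c. k c * (\<integral>\<^sup>+a. f a \<partial>(L2 c \<bind> L1)) \<partial>\<gamma>)"
    by (intro nn_integral_cong) (simp add: nn_integral_bind_kernel[OF L2 L1 f])
  finally show "(\<integral>\<^sup>+a. f a * (\<integral>\<^sup>+c. k c \<partial>(K1 a \<bind> K2)) \<partial>\<alpha>)
      = (\<integral>\<^sup>+c. k c * (\<integral>\<^sup>+a. f a \<partial>(L2 c \<bind> L1)) \<partial>\<gamma>)" .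
qed

lemma kernel_adjoint_unique:
  assumes "kernel_adjoint \<mu> K m L" "kernel_adjoint \<mu> K m L'"
    and "c \<in> borel_measurable \<mu>" "k \<in> borel_measurable m"
  shows "(\<integral>\<^sup>+x. k x * (\<integral>\<^sup>+a. c a \<partial>L x) \<partial>m) = (\<integral>\<^sup>+x. k x * (\<integral>\<^sup>+a. c a \<partial>L' x) \<partial>m)"
  using kernel_adjointD[OF assms(1,3,4)] kernel_adjointD[OF assms(2,3,4)] by simp

lemma kernel_adjoint_bind_product:
  assumes K: "K \<in> \<mu> \<rightarrow>\<^sub>M subprob_algebra m" and L: "L \<in> m \<rightarrow>\<^sub>M subprob_algebra \<mu>"
    and adj: "kernel_adjoint \<mu> K m L"
    and c: "c \<in> borel_measurable \<mu>" and d: "d \<in> borel_measurable \<mu>"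
  shows "(\<integral>\<^sup>+b. d b * (\<integral>\<^sup>+a. c a \<partial>(K b \<bind> L)) \<partial>\<mu>)
       = (\<integral>\<^sup>+x. (\<integral>\<^sup>+a. c a \<partial>L x) * (\<integral>\<^sup>+a. d a \<partial>L x) \<partial>m)"
proof -
  have Lc: "(\<lambda>x. \<integral>\<^sup>+a. c a \<partial>L x) \<in> borel_measurable m"
    by (rule measurable_nn_integral_kernel[OF L c])
  have "(\<integral>\<^sup>+b. d b * (\<integral>\<^sup>+a. c a \<partial>(K b \<bind> L)) \<partial>\<mu>)
      = (\<integral>\<^sup>+b. d b * (\<integral>\<^sup>+x. (\<integral>\<^sup>+a. c a \<partial>L x) \<partial>K b) \<partial>\<mu>)"
    by (intro nn_integral_cong) (simp add: nn_integral_bind_kernel[OF K L c])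
  then show ?thesis
    by (simp add: kernel_adjointD[OF adj d Lc])
qed

lemma prob_kernel_emeasure_space:
  assumes "K \<in> \<mu> \<rightarrow>\<^sub>M prob_algebra m" "a \<in> space \<mu>"
  shows "emeasure (K a) (space (K a)) = 1"
proof -
  have "prob_space (K a)"
    using measurable_space[OF assms] by (simp add: space_prob_algebra)
  then show ?thesis by (simp add: prob_space.emeasure_space_1)
qed

lemma kernel_adjoint_bind_invariant:
  assumes K: "K \<in> \<mu> \<rightarrow>\<^sub>M prob_algebra m" and L: "L \<in> m \<rightarrow>\<^sub>M prob_algebra \<mu>"
    and adj: "kernel_adjoint \<mu> K m L" and c: "c \<in> borel_measurable \<mu>"
  shows "(\<integral>\<^sup>+b. (\<integral>\<^sup>+a. c a \<partial>(K b \<bind> L)) \<partial>\<mu>) = (\<integral>\<^sup>+a. c a \<partial>\<mu>)"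
proof -
  note K' = measurable_prob_algebraD[OF K] and L' = measurable_prob_algebraD[OF L]
  have "(\<integral>\<^sup>+b. (\<integral>\<^sup>+a. c a \<partial>(K b \<bind> L)) \<partial>\<mu>) = (\<integral>\<^sup>+x. 1 * (\<integral>\<^sup>+a. c a \<partial>L x) \<partial>m)"
    using kernel_adjoint_bind_product[OF K' L' adj c, of "\<lambda>_. 1"]
    by (simp add: prob_kernel_emeasure_space[OF L] cong: nn_integral_cong)
  also have "\<dots> = (\<integral>\<^sup>+a. c a \<partial>\<mu>)"
    using kernel_adjointD[OF adj c, of "\<lambda>_. 1"]
    by (simp add: prob_kernel_emeasure_space[OF K] cong: nn_integral_cong)
  finally show ?thesis .
qed

lemma ennreal_square_diff_parts:
  fixes x y :: real
  defines "pos z \<equiv> ennreal (max z 0)" and "neg z \<equiv> ennreal (max (- z) 0)"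
  shows "ennreal ((x - y)\<^sup>2) + 2 * (pos x * pos y + neg x * neg y)
       = ennreal (x\<^sup>2) + ennreal (y\<^sup>2) + 2 * (pos x * neg y + neg x * pos y)"
proof -
  have "(x - y)\<^sup>2 + 2 * (max x 0 * max y 0 + max (- x) 0 * max (- y) 0)
      = x\<^sup>2 + y\<^sup>2 + 2 * (max x 0 * max (- y) 0 + max (- x) 0 * max y 0)"
    by (cases "0 \<le> x"; cases "0 \<le> y") (simp_all add: max_def power2_eq_square algebra_simps)
  from arg_cong[OF this, of ennreal] show ?thesis
    unfolding pos_def neg_def by (simp add: ennreal_plus ennreal_mult del: ennreal_plus_if)
qed

lemma ennreal_parts_products_le:
  fixes x y :: real
  defines "pos z \<equiv> ennreal (max z 0)" and "neg z \<equiv> ennreal (max (- z) 0)"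
  shows "2 * (pos x * pos y + neg x * neg y) \<le> ennreal (x\<^sup>2) + ennreal (y\<^sup>2)"
proof -
  have "2 * (max x 0 * max y 0 + max (- x) 0 * max (- y) 0) \<le> x\<^sup>2 + y\<^sup>2"
    using sum_squares_bound[of x y] by (cases "0 \<le> x"; cases "0 \<le> y") (simp_all add: max_def)
  then show ?thesis
    unfolding pos_def neg_def using ennreal_leI
    by (fastforce simp add: ennreal_plus ennreal_mult del: ennreal_plus_if)
qed

lemma nn_integral_square_diff_eq:
  fixes \<Lambda>1 \<Lambda>2 :: "('a \<times> 'a) measure" and h :: "'a \<Rightarrow> real"
  assumes sets1[measurable_cong]: "sets \<Lambda>1 = sets (X \<Otimes>\<^sub>M X)"
    and sets2[measurable_cong]: "sets \<Lambda>2 = sets (X \<Otimes>\<^sub>M X)"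
    and h[measurable]: "h \<in> borel_measurable X"
    and products: "\<And>c d. c \<in> borel_measurable X \<Longrightarrow> d \<in> borel_measurable X \<Longrightarrow>
      (\<integral>\<^sup>+z. c (fst z) * d (snd z) \<partial>\<Lambda>1) = (\<integral>\<^sup>+z. c (fst z) * d (snd z) \<partial>\<Lambda>2)"
    and fin_fst: "(\<integral>\<^sup>+z. ennreal ((h (fst z))\<^sup>2) \<partial>\<Lambda>1) < \<infinity>"
    and fin_snd: "(\<integral>\<^sup>+z. ennreal ((h (snd z))\<^sup>2) \<partial>\<Lambda>1) < \<infinity>"
  shows "(\<integral>\<^sup>+z. ennreal ((h (fst z) - h (snd z))\<^sup>2) \<partial>\<Lambda>1)
       = (\<integral>\<^sup>+z. ennreal ((h (fst z) - h (snd z))\<^sup>2) \<partial>\<Lambda>2)"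
proof -
  define pos where "pos a = ennreal (max (h a) 0)" for a
  define neg where "neg a = ennreal (max (- h a) 0)" for a
  define sq where "sq a = ennreal ((h a)\<^sup>2)" for a
  define G where "G z = ennreal ((h (fst z) - h (snd z))\<^sup>2)" for z
  define W where "W z = 2 * (pos (fst z) * pos (snd z) + neg (fst z) * neg (snd z))" for z
  define C where "C z = sq (fst z) + sq (snd z)
    + 2 * (pos (fst z) * neg (snd z) + neg (fst z) * pos (snd z))" for z
  have [measurable]: "pos \<in> borel_measurable X" "neg \<in> borel_measurable X" "sq \<in> borel_measurable X"
    unfolding pos_def neg_def sq_def by measurable
  have [measurable]: "G \<in> borel_measurable \<Lambda>1" "G \<in> borel_measurable \<Lambda>2"
    "W \<in> borel_measurable \<Lambda>1" "W \<in> borel_measurable \<Lambda>2"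
    unfolding G_def W_def by measurable
  have C_eq: "(\<integral>\<^sup>+z. C z \<partial>\<Lambda>1) = (\<integral>\<^sup>+z. C z \<partial>\<Lambda>2)"
    using products[of sq "\<lambda>_. 1"] products[of "\<lambda>_. 1" sq]
    unfolding C_def by (simp add: nn_integral_add nn_integral_cmult products)
  have W_eq: "(\<integral>\<^sup>+z. W z \<partial>\<Lambda>1) = (\<integral>\<^sup>+z. W z \<partial>\<Lambda>2)"
    unfolding W_def by (simp add: nn_integral_add nn_integral_cmult products)
  have "(\<integral>\<^sup>+z. W z \<partial>\<Lambda>1) \<le> (\<integral>\<^sup>+z. sq (fst z) + sq (snd z) \<partial>\<Lambda>1)"
    unfolding W_def pos_def neg_def sq_def by (intro nn_integral_mono ennreal_parts_products_le)
  also have "\<dots> < \<infinity>"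
    using fin_fst fin_snd unfolding sq_def by (simp add: nn_integral_add)
  finally have W_fin: "(\<integral>\<^sup>+z. W z \<partial>\<Lambda>1) < \<infinity>" .
  have GWC: "G z + W z = C z" for z
    unfolding G_def W_def C_def pos_def neg_def sq_def by (rule ennreal_square_diff_parts)
  have "(\<integral>\<^sup>+z. G z \<partial>\<Lambda>1) + (\<integral>\<^sup>+z. W z \<partial>\<Lambda>1) = (\<integral>\<^sup>+z. C z \<partial>\<Lambda>1)"
    and "(\<integral>\<^sup>+z. C z \<partial>\<Lambda>2) = (\<integral>\<^sup>+z. G z \<partial>\<Lambda>2) + (\<integral>\<^sup>+z. W z \<partial>\<Lambda>2)"
    by (simp_all add: nn_integral_add flip: GWC)
  with C_eq W_eq W_fin show ?thesis
    unfolding G_def by (auto simp: ennreal_add_left_cancel add.commute)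
qed

lemma measurable_bind_return_pairs:
  assumes R: "R \<in> N \<rightarrow>\<^sub>M subprob_algebra X" and \<phi>: "(\<lambda>(b, a). \<phi> a b) \<in> N \<Otimes>\<^sub>M X \<rightarrow>\<^sub>M Z"
  shows "(\<lambda>b. R b \<bind> (\<lambda>a. return Z (\<phi> a b))) \<in> N \<rightarrow>\<^sub>M subprob_algebra Z"
  using measurable_compose[OF \<phi> return_measurable]
  by (intro measurable_bind[OF R]) (simp add: split_beta')

lemma nn_integral_bind_return_pairs:
  assumes R: "R \<in> N \<rightarrow>\<^sub>M subprob_algebra X" and \<phi>: "(\<lambda>(b, a). \<phi> a b) \<in> N \<Otimes>\<^sub>M X \<rightarrow>\<^sub>M Z"
    and u: "u \<in> borel_measurable Z"
  shows "(\<integral>\<^sup>+z. u z \<partial>(N \<bind> (\<lambda>b. R b \<bind> (\<lambda>a. return Z (\<phi> a b)))))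
       = (\<integral>\<^sup>+b. \<integral>\<^sup>+a. u (\<phi> a b) \<partial>R b \<partial>N)"
proof -
  have inner: "(\<integral>\<^sup>+z. u z \<partial>(R b \<bind> (\<lambda>a. return Z (\<phi> a b)))) = (\<integral>\<^sup>+a. u (\<phi> a b) \<partial>R b)"
    if b: "b \<in> space N" for b
  proof -
    have "(\<lambda>a. \<phi> a b) \<in> R b \<rightarrow>\<^sub>M Z"
      using measurable_Pair2[OF \<phi> b] by (simp add: measurable_cong_sets[OF sets_kernel[OF R b] refl])
    then show ?thesis
      using subprob_space_kernel[OF R b]
      by (simp add: bind_return_distr' subprob_space.subprob_not_empty nn_integral_distr u)
  qed
  show ?thesis
    by (simp add: nn_integral_bind[OF u measurable_bind_return_pairs[OF R \<phi>]] inner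
        cong: nn_integral_cong)
qed

lemma markov_kernel_measurable:
  assumes "markov_kernel A B K" "sets A' = sets A" "sets B' = sets B"
  shows "K \<in> A' \<rightarrow>\<^sub>M prob_algebra B'"
proof -
  have "prob_algebra B' = prob_algebra B"
    unfolding prob_algebra_def using subprob_algebra_cong[OF assms(3)] by simp
  then show ?thesis
    using assms(1) unfolding markov_kernel_def by (simp add: measurable_cong_sets[OF assms(2) refl])
qed

(* adjoint_\<pi> expresses that \<pi> disintegrates \<nu> along the lumping map t. *)
locale lumped_chain =
  fixes \<nu> :: "'t measure" and M :: "'x measure" and s :: "'a measure"
    and P :: "'t \<Rightarrow> 'x measure" and Q :: "'x \<Rightarrow> 't measure"
    and t :: "'t \<Rightarrow> 'a" and \<pi> :: "'a \<Rightarrow> 't measure" and Qt :: "'x \<Rightarrow> 'a measure"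
  assumes P: "P \<in> \<nu> \<rightarrow>\<^sub>M prob_algebra M" and Q: "Q \<in> M \<rightarrow>\<^sub>M prob_algebra \<nu>"
    and t: "t \<in> \<nu> \<rightarrow>\<^sub>M s" and \<pi>: "\<pi> \<in> s \<rightarrow>\<^sub>M prob_algebra \<nu>"
    and Qt: "Qt \<in> M \<rightarrow>\<^sub>M prob_algebra s"
    and adjoint_PQ: "kernel_adjoint \<nu> P M Q"
    and adjoint_\<pi>: "kernel_adjoint s \<pi> \<nu> (\<lambda>\<theta>. return s (t \<theta>))"
    and adjoint_PQt: "kernel_adjoint s (\<lambda>a. \<pi> a \<bind> P) M Qt"
begin

lemma Pt: "(\<lambda>a. \<pi> a \<bind> P) \<in> s \<rightarrow>\<^sub>M prob_algebra M"
  by (rule measurable_bind_prob_space[OF \<pi> P])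

lemma Rt: "(\<lambda>b. (\<pi> b \<bind> P) \<bind> Qt) \<in> s \<rightarrow>\<^sub>M prob_algebra s"
  by (rule measurable_bind_prob_space[OF Pt Qt])

lemma R: "(\<lambda>\<eta>. P \<eta> \<bind> Q) \<in> \<nu> \<rightarrow>\<^sub>M prob_algebra \<nu>"
  by (rule measurable_bind_prob_space[OF P Q])

lemmas P_subprob = measurable_prob_algebraD[OF P]
  and Q_subprob = measurable_prob_algebraD[OF Q]
  and \<pi>_subprob = measurable_prob_algebraD[OF \<pi>]
  and Qt_subprob = measurable_prob_algebraD[OF Qt]
  and Pt_subprob = measurable_prob_algebraD[OF Pt]

lemma nn_integral_adjoint_image:
  assumes k: "k \<in> borel_measurable M" and c: "c \<in> borel_measurable s"
  shows "(\<integral>\<^sup>+x. k x * (\<integral>\<^sup>+a. c a \<partial>Qt x) \<partial>M) = (\<integral>\<^sup>+x. k x * (\<integral>\<^sup>+\<theta>. c (t \<theta>) \<partial>Q x) \<partial>M)"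
proof -
  have ret: "(\<lambda>\<theta>. return s (t \<theta>)) \<in> \<nu> \<rightarrow>\<^sub>M subprob_algebra s"
    by (rule measurable_compose[OF t return_measurable])
  have "kernel_adjoint s (\<lambda>a. \<pi> a \<bind> P) M (\<lambda>x. Q x \<bind> (\<lambda>\<theta>. return s (t \<theta>)))"
    by (rule kernel_adjoint_bind[OF \<pi>_subprob ret P_subprob Q_subprob adjoint_\<pi> adjoint_PQ])
  then have "(\<integral>\<^sup>+x. k x * (\<integral>\<^sup>+a. c a \<partial>Qt x) \<partial>M)
      = (\<integral>\<^sup>+x. k x * (\<integral>\<^sup>+a. c a \<partial>(Q x \<bind> (\<lambda>\<theta>. return s (t \<theta>)))) \<partial>M)"
    by (rule kernel_adjoint_unique[OF adjoint_PQt _ c k])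
  also have "\<dots> = (\<integral>\<^sup>+x. k x * (\<integral>\<^sup>+\<theta>. c (t \<theta>) \<partial>Q x) \<partial>M)"
  proof (intro nn_integral_cong arg_cong2[where f=times] refl)
    fix x assume x: "x \<in> space M"
    have "space (Q x) = space \<nu>"
      by (rule sets_eq_imp_space_eq[OF sets_kernel[OF Q_subprob x]])
    then show "(\<integral>\<^sup>+a. c a \<partial>(Q x \<bind> (\<lambda>\<theta>. return s (t \<theta>)))) = (\<integral>\<^sup>+\<theta>. c (t \<theta>) \<partial>Q x)"
      unfolding nn_integral_bind_kernel[OF Q_subprob ret c x]
      by (intro nn_integral_cong) (simp add: nn_integral_return[OF measurable_space[OF t] c])
  qed
  finally show ?thesis .
qed

lemma double_integral_product:
  assumes c: "c \<in> borel_measurable s" and d: "d \<in> borel_measurable s"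
  shows "(\<integral>\<^sup>+b. \<integral>\<^sup>+a. c a * d b \<partial>((\<pi> b \<bind> P) \<bind> Qt) \<partial>s)
       = (\<integral>\<^sup>+\<eta>. \<integral>\<^sup>+\<theta>. c (t \<theta>) * d (t \<eta>) \<partial>(P \<eta> \<bind> Q) \<partial>\<nu>)"
proof -
  have ct: "(\<lambda>\<theta>. c (t \<theta>)) \<in> borel_measurable \<nu>" and dt: "(\<lambda>\<theta>. d (t \<theta>)) \<in> borel_measurable \<nu>"
    using measurable_compose[OF t c] measurable_compose[OF t d] by simp_all
  let ?Qt = "\<lambda>f x. \<integral>\<^sup>+a. f a \<partial>Qt x" and ?Q = "\<lambda>f x. \<integral>\<^sup>+\<theta>. f (t \<theta>) \<partial>Q x"
  have Qt_c: "?Qt c \<in> borel_measurable M" and Q_d: "?Q d \<in> borel_measurable M"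
    using measurable_nn_integral_kernel[OF Qt_subprob c]
      measurable_nn_integral_kernel[OF Q_subprob dt]
    by simp_all
  have "(\<integral>\<^sup>+b. \<integral>\<^sup>+a. c a * d b \<partial>((\<pi> b \<bind> P) \<bind> Qt) \<partial>s) = (\<integral>\<^sup>+x. ?Qt c x * ?Qt d x \<partial>M)"
    using nn_integral_kernel_multc[OF measurable_prob_algebraD[OF Rt] c]
      kernel_adjoint_bind_product[OF Pt_subprob Qt_subprob adjoint_PQt c d] by simp
  also have "\<dots> = (\<integral>\<^sup>+x. ?Q d x * ?Qt c x \<partial>M)"
    using nn_integral_adjoint_image[OF Qt_c d] by (simp add: mult.commute)
  also have "\<dots> = (\<integral>\<^sup>+x. ?Q c x * ?Q d x \<partial>M)"
    using nn_integral_adjoint_image[OF Q_d c] by (simp add: mult.commute)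
  also have "\<dots> = (\<integral>\<^sup>+\<eta>. \<integral>\<^sup>+\<theta>. c (t \<theta>) * d (t \<eta>) \<partial>(P \<eta> \<bind> Q) \<partial>\<nu>)"
    using nn_integral_kernel_multc[OF measurable_prob_algebraD[OF R] ct]
      kernel_adjoint_bind_product[OF P_subprob Q_subprob adjoint_PQ ct dt] by simp
  finally show ?thesis .
qed

lemma dirichlet_form_lumped_eq:
  assumes h: "h \<in> borel_measurable s" and h_fin: "(\<integral>\<^sup>+a. ennreal ((h a)\<^sup>2) \<partial>s) < \<infinity>"
  shows "dirichlet_form (\<lambda>b. (\<pi> b \<bind> P) \<bind> Qt) s h = dirichlet_form (\<lambda>\<eta>. P \<eta> \<bind> Q) \<nu> (\<lambda>\<theta>. h (t \<theta>))"
proof (cases "space s = {}")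
  case True
  then have "space \<nu> = {}"
    using t by (simp add: measurable_empty_iff)
  with True show ?thesis
    by (simp add: dirichlet_form_def nn_integral_empty)
next
  case False
  then have \<nu>: "space \<nu> \<noteq> {}"
    using \<pi>_subprob by (auto simp: measurable_empty_iff space_subprob_algebra_empty_iff)
  note Rt' = measurable_prob_algebraD[OF Rt] and R' = measurable_prob_algebraD[OF R]
  have pairs1: "(\<lambda>(b, a). (a, b)) \<in> s \<Otimes>\<^sub>M s \<rightarrow>\<^sub>M s \<Otimes>\<^sub>M s"
    by measurable
  have pairs2: "(\<lambda>(\<eta>, \<theta>). (t \<theta>, t \<eta>)) \<in> \<nu> \<Otimes>\<^sub>M \<nu> \<rightarrow>\<^sub>M s \<Otimes>\<^sub>M s"
    using t by measurable
  define \<Lambda>1 where "\<Lambda>1 = s \<bind> (\<lambda>b. ((\<pi> b \<bind> P) \<bind> Qt) \<bind> (\<lambda>a. return (s \<Otimes>\<^sub>M s) (a, b)))"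
  define \<Lambda>2 where "\<Lambda>2 = \<nu> \<bind> (\<lambda>\<eta>. (P \<eta> \<bind> Q) \<bind> (\<lambda>\<theta>. return (s \<Otimes>\<^sub>M s) (t \<theta>, t \<eta>)))"
  have sets1: "sets \<Lambda>1 = sets (s \<Otimes>\<^sub>M s)"
    unfolding \<Lambda>1_def by (rule sets_bind[OF sets_kernel[OF measurable_bind_return_pairs[OF Rt' pairs1]] False])
  have sets2: "sets \<Lambda>2 = sets (s \<Otimes>\<^sub>M s)"
    unfolding \<Lambda>2_def by (rule sets_bind[OF sets_kernel[OF measurable_bind_return_pairs[OF R' pairs2]] \<nu>])
  have int1: "(\<integral>\<^sup>+z. u z \<partial>\<Lambda>1) = (\<integral>\<^sup>+b. \<integral>\<^sup>+a. u (a, b) \<partial>((\<pi> b \<bind> P) \<bind> Qt) \<partial>s)"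
    if "u \<in> borel_measurable (s \<Otimes>\<^sub>M s)" for u
    unfolding \<Lambda>1_def by (rule nn_integral_bind_return_pairs[OF Rt' pairs1 that])
  have int2: "(\<integral>\<^sup>+z. u z \<partial>\<Lambda>2) = (\<integral>\<^sup>+\<eta>. \<integral>\<^sup>+\<theta>. u (t \<theta>, t \<eta>) \<partial>(P \<eta> \<bind> Q) \<partial>\<nu>)"
    if "u \<in> borel_measurable (s \<Otimes>\<^sub>M s)" for u
    unfolding \<Lambda>2_def by (rule nn_integral_bind_return_pairs[OF R' pairs2 that])
  have "(\<integral>\<^sup>+z. ennreal ((h (fst z) - h (snd z))\<^sup>2) \<partial>\<Lambda>1)
      = (\<integral>\<^sup>+z. ennreal ((h (fst z) - h (snd z))\<^sup>2) \<partial>\<Lambda>2)"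
  proof (rule nn_integral_square_diff_eq[OF sets1 sets2 h])
    fix c d :: "'a \<Rightarrow> ennreal" assume "c \<in> borel_measurable s" "d \<in> borel_measurable s"
    then show "(\<integral>\<^sup>+z. c (fst z) * d (snd z) \<partial>\<Lambda>1) = (\<integral>\<^sup>+z. c (fst z) * d (snd z) \<partial>\<Lambda>2)"
      by (simp add: int1 int2 double_integral_product)
  qed (use h h_fin in \<open>simp_all add: int1 kernel_adjoint_bind_invariant[OF Pt Qt adjoint_PQt]
      prob_kernel_emeasure_space[OF Rt] cong: nn_integral_cong\<close>)
  then show ?thesis
    using h by (simp add: dirichlet_form_def int1 int2)
qed

end

lemma lumped_chainI:
  assumes P: "P \<in> \<nu> \<rightarrow>\<^sub>M prob_algebra M" and Q: "Q \<in> M \<rightarrow>\<^sub>M prob_algebra \<nu>"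
    and t: "t \<in> \<nu> \<rightarrow>\<^sub>M s" and \<pi>: "\<pi> \<in> s \<rightarrow>\<^sub>M prob_algebra \<nu>"
    and Qt: "Qt \<in> M \<rightarrow>\<^sub>M prob_algebra s"
    and PQ: "joint_identity P \<nu> Q M" and PQt: "joint_identity (\<lambda>a. \<pi> a \<bind> P) s Qt M"
    and disint: "\<And>U V. U \<in> sets s \<Longrightarrow> V \<in> sets \<nu> \<Longrightarrow>
      (\<integral>\<^sup>+\<theta>. indicator U (t \<theta>) * indicator V \<theta> \<partial>\<nu>) = (\<integral>\<^sup>+a. indicator U a * emeasure (\<pi> a) V \<partial>s)"
  shows "lumped_chain \<nu> M s P Q t \<pi> Qt"
proof
  show "kernel_adjoint \<nu> P M Q"
    by (rule joint_identity_imp_kernel_adjoint[OF measurable_prob_algebraD[OF P]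
          measurable_prob_algebraD[OF Q] PQ])
  show "kernel_adjoint s (\<lambda>a. \<pi> a \<bind> P) M Qt"
    by (rule joint_identity_imp_kernel_adjoint[OF measurable_prob_algebraD[OF
          measurable_bind_prob_space[OF \<pi> P]] measurable_prob_algebraD[OF Qt] PQt])
  show "kernel_adjoint s \<pi> \<nu> (\<lambda>\<theta>. return s (t \<theta>))"
    by (rule kernel_adjoint_disintegration[OF t measurable_prob_algebraD[OF \<pi>] disint])
qed (fact assms)+

theorem theorem3p3:
  fixes P :: "'t::polish_space \<Rightarrow> 'x::polish_space measure"
    and \<nu> :: "'t measure" and M :: "'x measure"
    and Q :: "'x \<Rightarrow> 't measure"
    and t :: "'t \<Rightarrow> real"
    and \<pi> :: "real \<Rightarrow> 't measure"
    and Qt :: "'x \<Rightarrow> real measure"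
    and ht :: "real \<Rightarrow> real"
  defines "S \<equiv> restrict_space (borel :: real measure) {0..}"
  defines "s \<equiv> distr \<nu> S t"
  defines "Pt \<equiv> (\<lambda>a. \<pi> a \<bind> P)"
  assumes P_kernel: "markov_kernel borel borel P"
    and nu_sets: "sets \<nu> = sets borel"
    and nu_sigma: "sigma_finite_measure \<nu>"
    and M_sets: "sets M = sets borel"
    and M_marginal: "\<forall>B\<in>sets borel. emeasure M B = (\<integral>\<^sup>+\<theta>. emeasure (P \<theta>) B \<partial>\<nu>)"
    and M_sigma: "sigma_finite_measure M"
    and Q_kernel: "markov_kernel borel borel Q"
    and PQ: "joint_identity P \<nu> Q M"
    and t_meas: "t \<in> borel \<rightarrow>\<^sub>M S"
    and partition: "\<exists>A :: nat \<Rightarrow> real set. (\<forall>i. A i \<in> sets borel) \<and> disjoint_family A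
        \<and> (\<Union>i. A i) = {0..}
        \<and> (\<forall>i. 0 < emeasure \<nu> (t -` A i) \<and> emeasure \<nu> (t -` A i) < \<infinity>)"
    and pi_kernel: "markov_kernel S borel \<pi>"
    and pi_disint: "\<forall>f1 f2. f1 \<in> borel_measurable borel \<longrightarrow> (\<forall>\<theta>. 0 \<le> f1 \<theta>) \<longrightarrow>
        f2 \<in> borel_measurable S \<longrightarrow> (\<forall>a. 0 \<le> f2 a) \<longrightarrow>
        (\<integral>\<^sup>+\<theta>. ennreal (f2 (t \<theta>) * f1 \<theta>) \<partial>\<nu>)
          = (\<integral>\<^sup>+a. ennreal (f2 a) * (\<integral>\<^sup>+\<theta>. ennreal (f1 \<theta>) \<partial>(\<pi> a)) \<partial>s)"
    and Qt_kernel: "markov_kernel borel S Qt"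
    and PQt: "joint_identity Pt s Qt M"
    and ht_L2: "in_L2 s ht"
  shows "in_L2 \<nu> (\<lambda>\<theta>. ht (t \<theta>))
    \<and> dirichlet_form (\<lambda>b. Pt b \<bind> Qt) s ht = dirichlet_form (\<lambda>\<eta>. P \<eta> \<bind> Q) \<nu> (\<lambda>\<theta>. ht (t \<theta>))"
proof -
  have sets_s: "sets s = sets S" and t: "t \<in> \<nu> \<rightarrow>\<^sub>M s"
    using t_meas unfolding s_def by (simp_all add: measurable_cong_sets[OF nu_sets refl])
  have \<pi>: "\<pi> \<in> s \<rightarrow>\<^sub>M prob_algebra \<nu>"
    by (rule markov_kernel_measurable[OF pi_kernel sets_s nu_sets])
  have disint: "(\<integral>\<^sup>+\<theta>. indicator U (t \<theta>) * indicator V \<theta> \<partial>\<nu>) = (\<integral>\<^sup>+a. indicator U a * emeasure (\<pi> a) V \<partial>s)"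
    if "U \<in> sets s" "V \<in> sets \<nu>" for U V
    using pi_disint[rule_format, of "indicator V" "indicator U"] that sets_s nu_sets
      sets_kernel[OF measurable_prob_algebraD[OF \<pi>]]
    by (simp add: ennreal_indicator ennreal_mult' nn_integral_indicator cong: nn_integral_cong)
  interpret lumped_chain \<nu> M s P Q t \<pi> Qt
    using P_kernel Q_kernel Qt_kernel nu_sets M_sets sets_s PQ PQt[unfolded Pt_def]
    by (intro lumped_chainI[OF _ _ t \<pi> _ _ _ disint]) (simp_all add: markov_kernel_measurable)
  have ht: "ht \<in> borel_measurable s" and ht_fin: "(\<integral>\<^sup>+a. ennreal ((ht a)\<^sup>2) \<partial>s) < \<infinity>"
    using ht_L2 unfolding in_L2_def integrable_iff_bounded by simp_all
  have "distr \<nu> s t = s"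
    unfolding s_def by (rule distr_cong) simp_all
  then have "in_L2 \<nu> (\<lambda>\<theta>. ht (t \<theta>))"
    using ht_L2 integrable_distr_eq[OF t, of "\<lambda>a. (ht a)\<^sup>2"] ht measurable_compose[OF t ht]
    unfolding in_L2_def by simp
  moreover have "dirichlet_form (\<lambda>b. Pt b \<bind> Qt) s ht = dirichlet_form (\<lambda>\<eta>. P \<eta> \<bind> Q) \<nu> (\<lambda>\<theta>. ht (t \<theta>))"
    unfolding Pt_def by (rule dirichlet_form_lumped_eq[OF ht ht_fin])
  ultimately show ?thesis ..
qed

end
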